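(* Let $(E,\mathcal{E},\nu)$ be a $\sigma$-finite measure space, $\phi$ a Young function satisfying the $\Delta_2$-condition, $w$ a weight function, and $\Psi:E\to E$ a non-singular measurable transformation inducing the composition operator $C_\Psi f=f\circ\Psi$ on the Orlicz-Lorentz space $L_{(\phi,w)}$. If the Radon–Nikodym derivative $f_\Psi=\frac{d(\nu\circ\Psi^{-1})}{d\nu}$ is bounded away from zero on its support and $\Psi^{-1}(\mathcal{E})=\mathcal{E}$, then $\mathcal{D}(C_\Psi)=0$.
   Context: A Young function is a convex $\phi:[0,\infty)\to[0,\infty)$ with $\phi(x)=0\iff x=0$ and $\lim_{x\to\infty}\phi(x)=\infty$; $\Delta_2$-condition: $\phi(2x)\le k\phi(x)$ for some $k>0$ and all $x>0$. A weight function is a non-increasing locally integrable $w:(0,\infty)\to(0,\infty)$ with $\int_0^\infty w=\infty$. For measurable $f$, $\nu_f(s)=\nu\{|f|>s\}$, $f^*(t)=\inf\{s>0:\nu_f(s)\le t\}$; $L_{(\phi,w)}$ is the space of measurable $f:E\to\mathbb{C}$ with $\int_0^\infty\phi(\alpha f^*(t))w(t)\,dt<\infty$ for some $\alpha>0$, with the Luxemburg norm. $\Psi$ non-singular: $\nu(\Psi^{-1}(S))=0$ whenever $\nu(S)=0$. A function $h$ is bounded away from zero on its support if there is $\epsilon>0$ with $h(x)\ge\epsilon$ for almost all $x\in\{h\neq0\}$. $\Psi^{-1}(\mathcal{E})=\{\Psi^{-1}(S):S\in\mathcal{E}\}$. The descent $\mathcal{D}(T)$ is the smallest non-negative integer $m$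 with $\mathcal{R}(T^{m+1})=\mathcal{R}(T^m)$ ($\mathcal{R}$ = range, $T^0=I$), and $\infty$ if none exists. *)

theory Defs
  imports "HOL-Analysis.Analysis"
begin

definition young_function :: "(real \<Rightarrow> real) \<Rightarrow> bool" where
  "young_function \<phi> \<longleftrightarrow>
     convex_on {0..} \<phi> \<and> (\<forall>x\<ge>0. \<phi> x \<ge> 0) \<and>
     (\<forall>x\<ge>0. \<phi> x = 0 \<longleftrightarrow> x = 0) \<and> filterlim \<phi> at_top at_top"

definition delta2 :: "(real \<Rightarrow> real) \<Rightarrow> bool" where
  "delta2 \<phi> \<longleftrightarrow> (\<exists>k>0. \<forall>x>0. \<phi> (2 * x) \<le> k * \<phi> x)"

definition weight_function :: "(real \<Rightarrow> real) \<Rightarrow> bool" where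
  "weight_function w \<longleftrightarrow>
     (\<forall>t>0. w t > 0) \<and> (\<forall>s t. 0 < s \<longrightarrow> s \<le> t \<longrightarrow> w t \<le> w s) \<and>
     (\<forall>t>0. set_integrable lborel {0<..t} w) \<and>
     (\<integral>\<^sup>+ t. indicator {0<..} t * ennreal (w t) \<partial>lborel) = \<infinity>"

definition distrib_fun :: "'a measure \<Rightarrow> ('a \<Rightarrow> complex) \<Rightarrow> real \<Rightarrow> ennreal" where
  "distrib_fun M f s = emeasure M {x \<in> space M. s < norm (f x)}"

definition rearr :: "'a measure \<Rightarrow> ('a \<Rightarrow> complex) \<Rightarrow> real \<Rightarrow> ereal" where
  "rearr M f t = Inf {ereal s | s. s > 0 \<and> distrib_fun M f s \<le> ennreal t}"

text \<open>The integrand phi(alpha f*(t)) w(t) is infinite wherever f*(t) is infinite, which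
  (f* being non-increasing) forces the integral to be infinite; hence we require f* finite.\<close>
definition orlicz_lorentz :: "'a measure \<Rightarrow> (real \<Rightarrow> real) \<Rightarrow> (real \<Rightarrow> real) \<Rightarrow> ('a \<Rightarrow> complex) set" where
  "orlicz_lorentz M \<phi> w = {f. f \<in> borel_measurable M \<and>
     (\<exists>\<alpha>>0. (\<forall>t>0. rearr M f t < \<infinity>) \<and>
        (\<integral>\<^sup>+ t. indicator {0<..} t *
            ennreal (\<phi> (\<alpha> * real_of_ereal (rearr M f t)) * w t) \<partial>lborel) < \<infinity>)}"

text \<open>Range of T^m on X, viewed modulo a.e. equality (union of the equivalence classes).\<close>
definition ae_range :: "'a measure \<Rightarrow> ('a \<Rightarrow> complex) set \<Rightarrow>
    (('a \<Rightarrow> complex) \<Rightarrow> ('a \<Rightarrow> complex)) \<Rightarrow> nat \<Rightarrow> ('a \<Rightarrow> complex) set" where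
  "ae_range M X T m = {g. \<exists>f\<in>X. AE x in M. g x = (T ^^ m) f x}"

definition descent :: "'a measure \<Rightarrow> ('a \<Rightarrow> complex) set \<Rightarrow>
    (('a \<Rightarrow> complex) \<Rightarrow> ('a \<Rightarrow> complex)) \<Rightarrow> enat" where
  "descent M X T = (if \<exists>m. ae_range M X T (Suc m) = ae_range M X T m
     then enat (LEAST m. ae_range M X T (Suc m) = ae_range M X T m) else \<infinity>)"

end

theory Submission
  imports Defs
begin

text \<open>Since \<open>\<Psi>\<^sup>-\<^sup>1(\<E>) = \<E>\<close>, every measurable \<open>f\<close> factors as \<open>f = h \<circ> \<Psi>\<close>, and \<open>h\<close> may
  be taken to vanish where \<open>f\<^sub>\<Psi> = 0\<close>, a set whose preimage under \<open>\<Psi>\<close> is null. Then for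
  \<open>s > 0\<close> we get \<open>\<nu>\<^sub>f(s) = \<nu>(\<Psi>\<^sup>-\<^sup>1{|h| > s}) = \<integral>\<^bsub>{|h| > s}\<^esub> f\<^sub>\<Psi> d\<nu> \<ge> \<epsilon> \<nu>\<^sub>h(s)\<close>, hence
  \<open>h\<^sup>*(t) \<le> f\<^sup>*(\<epsilon>t)\<close> (with \<open>\<epsilon> \<le> 1\<close>), and since \<open>w\<close> is non-increasing the modular
  \<open>\<integral> \<phi>(\<alpha>h\<^sup>*) w\<close> is at most \<open>1/\<epsilon>\<close> times that of \<open>f\<close>. So \<open>h\<close> lies in the Orlicz-Lorentz
  space and \<open>f = C\<^sub>\<Psi> h\<close>: \<open>C\<^sub>\<Psi>\<close> is onto, so its descent is \<open>0\<close>.\<close>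

lemma borel_measurable_factor_real:
  fixes g :: "'a \<Rightarrow> real" and \<Psi> :: "'a \<Rightarrow> 'b"
  assumes sets: "sets M \<subseteq> {\<Psi> -` S \<inter> space M | S. S \<in> sets N}"
    and g: "g \<in> borel_measurable M"
  obtains h where "h \<in> borel_measurable N" "\<And>x. x \<in> space M \<Longrightarrow> h (\<Psi> x) = g x"
proof -
  have "\<exists>B \<in> sets N. {x\<in>space M. g x < of_rat q} = \<Psi> -` B \<inter> space M" for q
  proof -
    have "{x\<in>space M. g x < of_rat q} \<in> sets M" using g by measurable
    then show ?thesis using sets by blast
  qed
  then obtain B where B: "\<And>q. B q \<in> sets N"
    and B_vimage: "\<And>q. {x\<in>space M. g x < of_rat q} = \<Psi> -` B q \<inter> space M"
    by metis
  define H where "H z = (INF q. if z \<in> B q then ereal (of_rat q) else \<infinity>)" for z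
  have H: "H \<in> borel_measurable N"
    unfolding H_def by (intro borel_measurable_INF) (auto intro!: measurable_If_set B)
  have H_comp: "H (\<Psi> x) = ereal (g x)" if x: "x \<in> space M" for x
  proof -
    have mem: "\<Psi> x \<in> B q \<longleftrightarrow> g x < of_rat q" for q
      using B_vimage[of q] x by blast
    show ?thesis
    proof (rule antisym)
      show "ereal (g x) \<le> H (\<Psi> x)"
        unfolding H_def by (rule INF_greatest) (auto simp: mem)
      show "H (\<Psi> x) \<le> ereal (g x)"
      proof (rule dense_ge)
        fix y assume "ereal (g x) < y"
        then obtain r where r: "g x < r" "ereal r \<le> y"
          by (metis ereal_dense2 less_eq_ereal_def less_ereal.simps(1))
        then obtain q where q: "g x < of_rat q" "of_rat q < r"
          using of_rat_dense by blast
        have "H (\<Psi> x) \<le> ereal (of_rat q)"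
          unfolding H_def by (rule INF_lower2[of q]) (auto simp: mem q)
        also have "\<dots> \<le> y" using q r by (meson ereal_less_eq(3) less_eq_real_def order_trans)
        finally show "H (\<Psi> x) \<le> y" .
      qed
    qed
  qed
  show thesis
    by (rule that[of "\<lambda>z. real_of_ereal (H z)"])
       (auto simp: H_comp intro: measurable_compose[OF H borel_measurable_real_of_ereal])
qed

lemma borel_measurable_factor_complex:
  fixes g :: "'a \<Rightarrow> complex" and \<Psi> :: "'a \<Rightarrow> 'b"
  assumes sets: "sets M \<subseteq> {\<Psi> -` S \<inter> space M | S. S \<in> sets N}"
    and g[measurable]: "g \<in> borel_measurable M"
  obtains h where "h \<in> borel_measurable N" "\<And>x. x \<in> space M \<Longrightarrow> h (\<Psi> x) = g x"
proof -
  obtain hr where hr[measurable]: "hr \<in> borel_measurable N"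
    and hr_comp: "\<And>x. x \<in> space M \<Longrightarrow> hr (\<Psi> x) = Re (g x)"
    by (rule borel_measurable_factor_real[OF sets, of "\<lambda>x. Re (g x)"]) auto
  obtain hi where hi[measurable]: "hi \<in> borel_measurable N"
    and hi_comp: "\<And>x. x \<in> space M \<Longrightarrow> hi (\<Psi> x) = Im (g x)"
    by (rule borel_measurable_factor_real[OF sets, of "\<lambda>x. Im (g x)"]) auto
  show thesis
    by (rule that[of "\<lambda>z. complex_of_real (hr z) + \<i> * complex_of_real (hi z)"])
       (auto simp: hr_comp hi_comp complex_eq_iff)
qed

lemma rearr_nonneg: "0 \<le> rearr M f t"
  unfolding rearr_def by (rule Inf_greatest) auto

lemma rearr_antimono: "t \<le> t' \<Longrightarrow> rearr M f t' \<le> rearr M f t"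
  unfolding rearr_def
  by (rule Inf_superset_mono) (fastforce intro: order_trans[OF _ ennreal_leI])

lemma rearr_le_rearr_scaled:
  assumes e: "0 < e"
    and dom: "\<And>s. 0 < s \<Longrightarrow> ennreal e * distrib_fun M h s \<le> distrib_fun M f s"
  shows "rearr M h t \<le> rearr M f (e * t)"
  unfolding rearr_def
proof (rule Inf_superset_mono, safe)
  fix s assume s: "0 < s" "distrib_fun M f s \<le> ennreal (e * t)"
  have "ennreal e * distrib_fun M h s \<le> ennreal e * ennreal t"
  proof (cases "t \<ge> 0")
    case True
    then show ?thesis using dom[of s] s e by (metis ennreal_mult order_trans less_imp_le)
  next
    case False
    then have "e * t \<le> 0" using e by (simp add: mult_pos_neg less_imp_le)
    then have "distrib_fun M f s = 0" using s by (metis ennreal_eq_0_iff order.antisym zero_le)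
    then have "ennreal e * distrib_fun M h s = 0" using dom[of s] s by (metis le_zero_eq)
    then show ?thesis by (metis zero_le)
  qed
  then have "distrib_fun M h s \<le> ennreal t"
    using e by (subst (asm) ennreal_mult_le_mult_iff) auto
  then show "\<exists>s'. ereal s = ereal s' \<and> 0 < s' \<and> distrib_fun M h s' \<le> ennreal t"
    using s by auto
qed

lemma young_function_mono:
  assumes "young_function \<phi>" "0 \<le> x" "x \<le> y"
  shows "\<phi> x \<le> \<phi> y"
proof (cases "y = 0")
  case True
  then show ?thesis using assms by simp
next
  case False
  then have y: "y > 0" using assms by simp
  have convex: "convex_on {0..} \<phi>" and nonneg: "\<phi> y \<ge> 0" and zero: "\<phi> 0 = 0"
    using assms unfolding young_function_def by auto
  define u where "u = x / y"
  have u: "0 \<le> u" "u \<le> 1" using assms y by (auto simp: u_def)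
  have "\<phi> x = \<phi> ((1 - u) *\<^sub>R 0 + u *\<^sub>R y)" using y by (simp add: u_def)
  also have "\<dots> \<le> (1 - u) * \<phi> 0 + u * \<phi> y"
    using convex u y by (intro convex_onD) auto
  also have "\<dots> \<le> \<phi> y" using u nonneg zero by (simp add: mult_left_le_one_le)
  finally show ?thesis .
qed

lemma borel_measurable_indicator_antimono:
  fixes g :: "real \<Rightarrow> real"
  assumes "\<And>s t. 0 < s \<Longrightarrow> s \<le> t \<Longrightarrow> g t \<le> g s"
  shows "(\<lambda>t. indicator {0<..} t * ennreal (g t)) \<in> borel_measurable borel"
proof -
  have "mono_on {0<..} (\<lambda>t. - g t)"
    using assms by (simp add: mono_on_def)
  then have "(\<lambda>t. - (- g t)) \<in> borel_measurable (restrict_space borel {0<..})"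
    by (rule borel_measurable_uminus[OF borel_measurable_mono_on_fnc])
  then have "(\<lambda>t. indicator {0<..} t *\<^sub>R g t) \<in> borel_measurable borel"
    by (simp add: borel_measurable_restrict_space_iff)
  then have "(\<lambda>t. ennreal (indicator {0<..} t *\<^sub>R g t)) \<in> borel_measurable borel"
    by measurable
  moreover have "ennreal (indicator {0<..} t *\<^sub>R g t) = indicator {0<..} t * ennreal (g t)" for t
    by (auto simp: indicator_def)
  ultimately show ?thesis by simp
qed

lemma orlicz_lorentz_integrand_le:
  assumes young: "young_function \<phi>" and weight: "weight_function w" and \<alpha>: "0 \<le> \<alpha>"
    and st: "0 < s" "s \<le> t" and fin: "rearr M f s < \<infinity>" and le: "rearr M h t \<le> rearr M f s"
  shows "\<phi> (\<alpha> * real_of_ereal (rearr M h t)) * w t \<le> \<phi> (\<alpha> * real_of_ereal (rearr M f s)) * w s"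
proof (rule mult_mono)
  have h_nonneg: "0 \<le> real_of_ereal (rearr M h t)"
    using rearr_nonneg[of M h t] by (simp add: real_of_ereal_pos)
  have "real_of_ereal (rearr M h t) \<le> real_of_ereal (rearr M f s)"
    using fin le rearr_nonneg[of M h t] by (intro real_of_ereal_positive_mono) auto
  then show "\<phi> (\<alpha> * real_of_ereal (rearr M h t)) \<le> \<phi> (\<alpha> * real_of_ereal (rearr M f s))"
    by (rule young_function_mono[OF young mult_nonneg_nonneg[OF \<alpha> h_nonneg] mult_left_mono[OF _ \<alpha>]])
  have w_pos: "\<forall>t>0. 0 < w t" and w_antimono: "\<forall>s t. 0 < s \<longrightarrow> s \<le> t \<longrightarrow> w t \<le> w s"
    using weight unfolding weight_function_def by blast+
  show "w t \<le> w s" using w_antimono st by blast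
  show "0 \<le> w t" using w_pos st by (meson less_imp_le order.strict_trans2)
  have "0 \<le> real_of_ereal (rearr M f s)"
    using rearr_nonneg[of M f s] by (simp add: real_of_ereal_pos)
  then show "0 \<le> \<phi> (\<alpha> * real_of_ereal (rearr M f s))"
    using young \<alpha> unfolding young_function_def by simp
qed

lemma orlicz_lorentz_distrib_dominated:
  assumes f: "f \<in> orlicz_lorentz M \<phi> w" and young: "young_function \<phi>" and weight: "weight_function w"
    and h: "h \<in> borel_measurable M" and e: "0 < e" "e \<le> 1"
    and dom: "\<And>s. 0 < s \<Longrightarrow> ennreal e * distrib_fun M h s \<le> distrib_fun M f s"
  shows "h \<in> orlicz_lorentz M \<phi> w"
proof -
  obtain \<alpha> where \<alpha>: "\<alpha> > 0" and f_fin: "\<forall>t>0. rearr M f t < \<infinity>"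
    and f_int: "(\<integral>\<^sup>+ t. indicator {0<..} t *
            ennreal (\<phi> (\<alpha> * real_of_ereal (rearr M f t)) * w t) \<partial>lborel) < \<infinity>"
    using f unfolding orlicz_lorentz_def by auto
  define F where "F t = indicator {0<..} t * ennreal (\<phi> (\<alpha> * real_of_ereal (rearr M f t)) * w t)"
    for t
  have h_le: "rearr M h t \<le> rearr M f (e * t)" for t
    by (rule rearr_le_rearr_scaled[OF e(1) dom])
  have h_fin: "\<forall>t>0. rearr M h t < \<infinity>"
    using h_le f_fin e(1) by (meson mult_pos_pos order.strict_trans1)
  have F: "F \<in> borel_measurable borel"
    unfolding F_def using \<alpha> f_fin
    by (intro borel_measurable_indicator_antimono orlicz_lorentz_integrand_le[OF young weight]
        rearr_antimono) auto
  have "ennreal e * (\<integral>\<^sup>+t. F (e * t) \<partial>lborel) = (\<integral>\<^sup>+t. F t \<partial>lborel)"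
    using nn_integral_real_affine[OF F, of e 0] e by simp
  also have "\<dots> < \<infinity>" using f_int unfolding F_def .
  finally have F_scaled_int: "(\<integral>\<^sup>+t. F (e * t) \<partial>lborel) < \<infinity>"
    using e by (auto simp: ennreal_mult_less_top)
  have "indicator {0<..} t * ennreal (\<phi> (\<alpha> * real_of_ereal (rearr M h t)) * w t) \<le> F (e * t)"
    for t
  proof (cases "t > 0")
    case True
    then have "0 < e * t" "e * t \<le> t" using e by (auto simp: mult_le_cancel_right1)
    then show ?thesis
      unfolding F_def using True \<alpha> f_fin h_le
      by (auto intro!: ennreal_leI orlicz_lorentz_integrand_le[OF young weight])
  qed simp
  then have "(\<integral>\<^sup>+ t. indicator {0<..} t * ennreal (\<phi> (\<alpha> * real_of_ereal (rearr M h t)) * w t)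
      \<partial>lborel) < \<infinity>"
    by (intro le_less_trans[OF nn_integral_mono F_scaled_int])
  then show ?thesis
    unfolding orlicz_lorentz_def using h \<alpha> h_fin by auto
qed

lemma absolutely_continuous_distr_nonsingular:
  assumes "\<Psi> \<in> measurable M N"
    and "\<forall>S\<in>sets N. emeasure N S = 0 \<longrightarrow> emeasure M (\<Psi> -` S \<inter> space M) = 0"
  shows "absolutely_continuous N (distr M N \<Psi>)"
  unfolding absolutely_continuous_def
proof
  fix S assume "S \<in> null_sets N"
  then show "S \<in> null_sets (distr M N \<Psi>)"
    using assms by (auto simp: null_sets_def emeasure_distr)
qed

lemma (in sigma_finite_measure) emeasure_RN_deriv:
  assumes "absolutely_continuous M N" "sets N = sets M" "A \<in> sets M"
  shows "emeasure N A = (\<integral>\<^sup>+x. RN_deriv M N x * indicator A x \<partial>M)"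
proof -
  have "emeasure N A = emeasure (density M (RN_deriv M N)) A"
    using density_RN_deriv[OF assms(1,2)] by simp
  also have "\<dots> = (\<integral>\<^sup>+x. RN_deriv M N x * indicator A x \<partial>M)"
    using assms(3) by (simp add: emeasure_density)
  finally show ?thesis .
qed

lemma (in sigma_finite_measure) emeasure_RN_deriv_eq_0:
  assumes "absolutely_continuous M N" "sets N = sets M"
  shows "emeasure N {x \<in> space M. RN_deriv M N x = 0} = 0"
proof -
  have "{x \<in> space M. RN_deriv M N x = 0} \<in> sets M" by measurable
  with assms show ?thesis
    by (simp add: emeasure_RN_deriv nn_integral_0_iff_AE indicator_def)
qed

lemma (in sigma_finite_measure) emeasure_le_RN_deriv_lower_bound:
  assumes "absolutely_continuous M N" "sets N = sets M" "A \<in> sets M"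
    and bound: "AE x in M. x \<in> A \<longrightarrow> c \<le> RN_deriv M N x"
  shows "c * emeasure M A \<le> emeasure N A"
proof -
  have "c * emeasure M A = (\<integral>\<^sup>+x. c * indicator A x \<partial>M)"
    using assms by (simp add: nn_integral_cmult_indicator)
  also have "\<dots> \<le> (\<integral>\<^sup>+x. RN_deriv M N x * indicator A x \<partial>M)"
    using bound by (intro nn_integral_mono_AE) (auto simp: indicator_def elim!: eventually_mono)
  also have "\<dots> = emeasure N A"
    using assms by (simp add: emeasure_RN_deriv)
  finally show ?thesis .
qed

lemma distrib_fun_ae_comp:
  assumes \<Psi>[measurable]: "\<Psi> \<in> measurable M N" and h[measurable]: "h \<in> borel_measurable N"
    and f[measurable]: "f \<in> borel_measurable M" and ae: "AE x in M. f x = h (\<Psi> x)"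
  shows "distrib_fun M f s = distrib_fun (distr M N \<Psi>) h s"
proof -
  have "distrib_fun M f s = emeasure M (\<Psi> -` {y \<in> space N. s < norm (h y)} \<inter> space M)"
    unfolding distrib_fun_def
  proof (rule emeasure_eq_AE)
    show "AE x in M. (x \<in> {x \<in> space M. s < norm (f x)}) =
        (x \<in> \<Psi> -` {y \<in> space N. s < norm (h y)} \<inter> space M)"
      using ae by eventually_elim (auto simp: measurable_space[OF \<Psi>])
    show "{x \<in> space M. s < norm (f x)} \<in> sets M" by measurable
    show "\<Psi> -` {y \<in> space N. s < norm (h y)} \<inter> space M \<in> sets M" by measurable
  qed
  also have "\<dots> = distrib_fun (distr M N \<Psi>) h s"
    unfolding distrib_fun_def by (simp add: emeasure_distr)
  finally show ?thesis .
qed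

lemma ae_factor_supported_by_RN_deriv:
  fixes f :: "'a \<Rightarrow> complex"
  assumes "sigma_finite_measure M" and \<Psi>[measurable]: "\<Psi> \<in> measurable M M"
    and nonsingular: "\<forall>S\<in>sets M. emeasure M S = 0 \<longrightarrow> emeasure M (\<Psi> -` S \<inter> space M) = 0"
    and sets: "sets M \<subseteq> {\<Psi> -` S \<inter> space M | S. S \<in> sets M}"
    and f[measurable]: "f \<in> borel_measurable M"
  obtains h where "h \<in> borel_measurable M"
    and "\<And>y. y \<in> space M \<Longrightarrow> RN_deriv M (distr M M \<Psi>) y = 0 \<Longrightarrow> h y = 0"
    and "AE x in M. f x = h (\<Psi> x)"
proof -
  interpret sigma_finite_measure M by fact
  define Z where "Z = {y \<in> space M. RN_deriv M (distr M M \<Psi>) y = 0}"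
  have Z[measurable]: "Z \<in> sets M" unfolding Z_def by measurable
  obtain g where g[measurable]: "g \<in> borel_measurable M"
    and g_comp: "\<And>x. x \<in> space M \<Longrightarrow> g (\<Psi> x) = f x"
    using borel_measurable_factor_complex[OF sets f] by blast
  define h where "h y = (if y \<in> Z then 0 else g y)" for y
  have "emeasure M (\<Psi> -` Z \<inter> space M) = 0"
    using emeasure_RN_deriv_eq_0[OF absolutely_continuous_distr_nonsingular[OF \<Psi> nonsingular]]
    by (simp add: Z_def emeasure_distr)
  then have "AE x in M. x \<notin> \<Psi> -` Z \<inter> space M"
    by (intro AE_not_in) (simp add: null_sets_def)
  then have ae: "AE x in M. f x = h (\<Psi> x)"
    using AE_space by eventually_elim (simp add: h_def g_comp)
  have "h \<in> borel_measurable M"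
    unfolding h_def by measurable
  from that[OF this _ ae] show thesis
    by (simp add: h_def Z_def)
qed

lemma orlicz_lorentz_ae_factor:
  assumes "sigma_finite_measure M" and young: "young_function \<phi>" and weight: "weight_function w"
    and \<Psi>[measurable]: "\<Psi> \<in> measurable M M"
    and nonsingular: "\<forall>S\<in>sets M. emeasure M S = 0 \<longrightarrow> emeasure M (\<Psi> -` S \<inter> space M) = 0"
    and c: "0 < c" "AE x in M. RN_deriv M (distr M M \<Psi>) x \<noteq> 0 \<longrightarrow> c \<le> RN_deriv M (distr M M \<Psi>) x"
    and sets: "sets M \<subseteq> {\<Psi> -` S \<inter> space M | S. S \<in> sets M}"
    and f: "f \<in> orlicz_lorentz M \<phi> w"
  shows "\<exists>h \<in> orlicz_lorentz M \<phi> w. AE x in M. f x = h (\<Psi> x)"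
proof -
  interpret sigma_finite_measure M by fact
  define N where "N = distr M M \<Psi>"
  have ac: "absolutely_continuous M N" and sets_N: "sets N = sets M"
    unfolding N_def using absolutely_continuous_distr_nonsingular[OF \<Psi> nonsingular] by auto
  have f_meas: "f \<in> borel_measurable M"
    using f unfolding orlicz_lorentz_def by auto
  obtain h where h[measurable]: "h \<in> borel_measurable M"
    and h_supp: "\<And>y. y \<in> space M \<Longrightarrow> RN_deriv M N y = 0 \<Longrightarrow> h y = 0"
    and ae: "AE x in M. f x = h (\<Psi> x)"
    using ae_factor_supported_by_RN_deriv[OF assms(1) \<Psi> nonsingular sets f_meas]
    unfolding N_def by blast
  define e where "e = enn2real (min c 1)"
  have "min c 1 < top" by (simp add: min.strict_coboundedI2)
  then have e: "0 < e" "e \<le> 1" "ennreal e \<le> c"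
    using c(1) unfolding e_def by (auto simp: enn2real_positive_iff enn2real_leI)
  have "ennreal e * distrib_fun M h s \<le> distrib_fun M f s" if s: "0 < s" for s
  proof -
    have "AE x in M. x \<in> {x \<in> space M. s < norm (h x)} \<longrightarrow> ennreal e \<le> RN_deriv M N x"
      using c(2) unfolding N_def[symmetric]
      by eventually_elim (use s e(3) h_supp in \<open>force intro: order_trans\<close>)
    then have "ennreal e * distrib_fun M h s \<le> emeasure N {x \<in> space M. s < norm (h x)}"
      unfolding distrib_fun_def by (intro emeasure_le_RN_deriv_lower_bound[OF ac sets_N]) auto
    also have "\<dots> = distrib_fun M f s"
      using distrib_fun_ae_comp[OF \<Psi> h f_meas ae] by (simp add: distrib_fun_def N_def)
    finally show ?thesis .
  qed
  with orlicz_lorentz_distrib_dominated[OF f young weight h e(1,2)] ae show ?thesis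
    by blast
qed

lemma descent_eq_0I:
  assumes into: "\<And>f. f \<in> X \<Longrightarrow> T f \<in> X"
    and onto: "\<And>f. f \<in> X \<Longrightarrow> \<exists>h\<in>X. AE x in M. f x = T h x"
  shows "descent M X T = 0"
proof -
  have "ae_range M X T (Suc 0) = ae_range M X T 0"
  proof (intro set_eqI iffI)
    fix g assume "g \<in> ae_range M X T (Suc 0)"
    then obtain f where "f \<in> X" "AE x in M. g x = T f x"
      by (auto simp: ae_range_def)
    then show "g \<in> ae_range M X T 0"
      using into by (auto simp: ae_range_def)
  next
    fix g assume "g \<in> ae_range M X T 0"
    then obtain f where f: "f \<in> X" "AE x in M. g x = f x"
      by (auto simp: ae_range_def)
    obtain h where h: "h \<in> X" "AE x in M. f x = T h x"
      using onto[OF f(1)] by blast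
    from f(2) h(2) have "AE x in M. g x = T h x"
      by eventually_elim simp
    with h(1) show "g \<in> ae_range M X T (Suc 0)"
      by (auto simp: ae_range_def)
  qed
  then show ?thesis
    unfolding descent_def by (auto simp: zero_enat_def intro!: Least_eq_0)
qed

theorem theorem4p1:
  fixes M :: "'a measure" and \<phi> w :: "real \<Rightarrow> real" and \<Psi> :: "'a \<Rightarrow> 'a"
  assumes "sigma_finite_measure M"
    and "young_function \<phi>" and "delta2 \<phi>"
    and "weight_function w"
    and "\<Psi> \<in> measurable M M"
    and "\<forall>S\<in>sets M. emeasure M S = 0 \<longrightarrow> emeasure M (\<Psi> -` S \<inter> space M) = 0"
    and "\<forall>f\<in>orlicz_lorentz M \<phi> w. f \<circ> \<Psi> \<in> orlicz_lorentz M \<phi> w"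
    and "\<exists>\<epsilon>>0. AE x in M. RN_deriv M (distr M M \<Psi>) x \<noteq> 0 \<longrightarrow>
                           RN_deriv M (distr M M \<Psi>) x \<ge> \<epsilon>"
    and "{\<Psi> -` S \<inter> space M | S. S \<in> sets M} = sets M"
  shows "descent M (orlicz_lorentz M \<phi> w) (\<lambda>f. f \<circ> \<Psi>) = 0"
proof (rule descent_eq_0I)
  obtain \<epsilon> where "0 < \<epsilon>"
    and "AE x in M. RN_deriv M (distr M M \<Psi>) x \<noteq> 0 \<longrightarrow> \<epsilon> \<le> RN_deriv M (distr M M \<Psi>) x"
    using assms(8) by blast
  note factor = orlicz_lorentz_ae_factor[OF assms(1,2,4,5,6) this equalityD2[OF assms(9)]]
  show "\<exists>h\<in>orlicz_lorentz M \<phi> w. AE x in M. f x = (h \<circ> \<Psi>) x"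
    if "f \<in> orlicz_lorentz M \<phi> w" for f
    using factor[OF that] by simp
  show "f \<circ> \<Psi> \<in> orlicz_lorentz M \<phi> w" if "f \<in> orlicz_lorentz M \<phi> w" for f
    using assms(7) that by blast
qed

end
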